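(* For all positive integers $m_1,\dots,m_S$, $B(m_1,\dots,m_S)$ equals the coefficient of $x_1^{m_1}\cdots x_S^{m_S}$ in the Taylor expansion at the origin of $$F_B(x_1,\dots,x_S)=\frac{x_1\cdots x_S}{(1-x_1)\cdots(1-x_S)(1-x_1-\dots-x_S)}.$$
   Context: For nonnegative integers $n_1,\dots,n_S$, $E(n_1,\dots,n_S)$ denotes the number of block derangements: $S$ players hold $n_1,\dots,n_S$ distinct cards respectively; all $N=n_1+\dots+n_S$ cards are redealt so that player $j$ again receives exactly $n_j$ cards (only which cards each player gets matters); $E$ counts the deals in which no player receives any card he originally held. Equivalently, $E(n_1,\dots,n_S)$ is the coefficient of $x_1^{n_1}\cdots x_S^{n_S}$ in $\prod_{j=1}^S(x_1+\dots+x_S-x_j)^{n_j}$. By convention $E(0,\dots,0)=1$. For positive integers $m_1,\dots,m_S$, $B(m_1,\dots,m_S)=\sum_{k_1=1}^{m_1}\cdots\sum_{k_S=1}^{m_S}\binom{m_1}{k_1}\cdots\binom{m_S}{k_S}E(k_1-1,\dots,k_S-1)$. *)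

theory Defs
  imports Complex_Main "HOL-Library.FuncSet"
begin

text \<open>Players are indexed by 0..<S; a tuple (n_1,...,n_S) is a function n :: nat => nat
  of which only the values on 0..<S matter.  Player j originally holds the cards (j,t), t < n j.\<close>

definition cards :: "nat \<Rightarrow> (nat \<Rightarrow> nat) \<Rightarrow> (nat \<times> nat) set" where
  "cards S n = {(j, t). j < S \<and> t < n j}"

text \<open>Block derangements: redeals f (each card goes to some player), player i again receives
  exactly n i cards, and no card goes back to its original holder.\<close>
definition E :: "nat \<Rightarrow> (nat \<Rightarrow> nat) \<Rightarrow> nat" where
  "E S n = card {f \<in> cards S n \<rightarrow>\<^sub>E {0..<S}.
      (\<forall>c\<in>cards S n. f c \<noteq> fst c) \<and>
      (\<forall>i<S. card {c \<in> cards S n. f c = i} = n i)}"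

definition B :: "nat \<Rightarrow> (nat \<Rightarrow> nat) \<Rightarrow> nat" where
  "B S m = (\<Sum>k \<in> PiE {0..<S} (\<lambda>i. {1..m i}).
      (\<Prod>i<S. m i choose k i) * E S (\<lambda>i. k i - 1))"

text \<open>Formal power series in the variables x_0..x_{S-1} with real coefficients:
  a function from exponent vectors to coefficients; only exponent vectors supported
  in 0..<S are relevant.\<close>

definition expvecs :: "nat \<Rightarrow> (nat \<Rightarrow> nat) set" where
  "expvecs S = {\<alpha>. \<forall>i\<ge>S. \<alpha> i = 0}"

type_synonym mps = "(nat \<Rightarrow> nat) \<Rightarrow> real"

definition mps_mult :: "mps \<Rightarrow> mps \<Rightarrow> mps" where
  "mps_mult f g \<alpha> = (\<Sum>\<beta> \<in> {\<beta>. \<forall>i. \<beta> i \<le> \<alpha> i}. f \<beta> * g (\<lambda>i. \<alpha> i - \<beta> i))"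

definition mps_one :: mps where
  "mps_one \<alpha> = (if \<alpha> = (\<lambda>_. 0) then 1 else 0)"

definition mps_var :: "nat \<Rightarrow> mps" where
  "mps_var i \<alpha> = (if \<alpha> = (\<lambda>j. if j = i then 1 else 0) then 1 else 0)"

definition mps_prod :: "nat list \<Rightarrow> (nat \<Rightarrow> mps) \<Rightarrow> mps" where
  "mps_prod is F = foldr (\<lambda>i acc. mps_mult (F i) acc) is mps_one"

definition FB_num :: "nat \<Rightarrow> mps" where
  "FB_num S = mps_prod [0..<S] mps_var"

definition FB_den :: "nat \<Rightarrow> mps" where
  "FB_den S = mps_mult (mps_prod [0..<S] (\<lambda>i \<alpha>. mps_one \<alpha> - mps_var i \<alpha>))
                       (\<lambda>\<alpha>. mps_one \<alpha> - (\<Sum>i<S. mps_var i \<alpha>))"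

text \<open>P is the Taylor expansion at the origin of FB_num / FB_den (which has constant term 1):
  FB_den * P = FB_num as formal power series in S variables.\<close>
definition is_expansion_FB :: "nat \<Rightarrow> mps \<Rightarrow> bool" where
  "is_expansion_FB S P \<longleftrightarrow> (\<forall>\<alpha>\<in>expvecs S. mps_mult (FB_den S) P \<alpha> = FB_num S \<alpha>)"

end

theory Submission
  imports Defs
begin

(* Write K(c) for the total number of deals of all hands b <= c
   (componentwise), where a deal of the hand vector b is any redistribution of the
   cards in which player i again receives b_i cards.

   Series side: if a function K satisfies K(c) = 1 + sum_{i, c_i >= 1} K(c - e_i),
   then the series x_1...x_S * sum_c K(c) x^c solves
   FB_den * P = FB_num: multiplying it by (1 - x_1 - ... - x_S) leaves the indicator
   of the exponents >= (1,...,1), and each factor (1 - x_i) then pins the i-th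
   exponent to 1, leaving the monomial x_1...x_S.  As FB_den has constant term 1,
   the solution is unique on exponent vectors supported in 0..<S.

   Counting side: the number of deals satisfies the multinomial recursion (classify
   by the receiver of one fixed card), hence cumulative deal counts satisfy the
   recursion above.  Splitting a deal into the set of cards that change hands (on
   which it is a block derangement) and the rest gives
   deals(c) = sum_{n <= c} prod_i C(c_i, n_i) E(n); summing over b <= c and using
   the hockey-stick identity turns the cumulative count at c = m - 1 into B(m). *)

(* Exponent vectors with finitely many nonzero entries; only for these is the
   convolution mps_mult a finite sum. *)
definition finite_support :: "(nat \<Rightarrow> nat) \<Rightarrow> bool" where
  "finite_support \<alpha> \<longleftrightarrow> finite {i. \<alpha> i \<noteq> 0}"

abbreviation below :: "(nat \<Rightarrow> nat) \<Rightarrow> (nat \<Rightarrow> nat) set" where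
  "below \<alpha> \<equiv> {\<beta>. \<forall>i. \<beta> i \<le> \<alpha> i}"

lemma finite_below:
  assumes "finite_support \<alpha>"
  shows "finite (below \<alpha>)"
proof -
  define I where "I = {i. \<alpha> i \<noteq> 0}"
  have "below \<alpha> \<subseteq> (\<lambda>g i. if i \<in> I then g i else 0) ` PiE I (\<lambda>i. {..\<alpha> i})"
  proof
    fix \<beta> assume \<beta>: "\<beta> \<in> below \<alpha>"
    have "\<beta> = (\<lambda>i. if i \<in> I then restrict \<beta> I i else 0)"
    proof
      fix i show "\<beta> i = (if i \<in> I then restrict \<beta> I i else 0)"
        using \<beta>[simplified, rule_format, of i] by (auto simp: I_def)
    qed
    moreover have "restrict \<beta> I \<in> PiE I (\<lambda>i. {..\<alpha> i})"
      using \<beta> by auto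
    ultimately show "\<beta> \<in> (\<lambda>g i. if i \<in> I then g i else 0) ` PiE I (\<lambda>i. {..\<alpha> i})"
      by blast
  qed
  moreover have "finite (PiE I (\<lambda>i. {..\<alpha> i}))"
    using assms by (simp add: finite_support_def I_def finite_PiE)
  ultimately show ?thesis
    using finite_subset by blast
qed

lemma infinite_below:
  assumes "\<not> finite_support \<alpha>"
  shows "infinite (below \<alpha>)"
proof
  assume "finite (below \<alpha>)"
  define I where "I = {i. \<alpha> i \<noteq> 0}"
  define single where "single i = (\<lambda>j. if j = i then \<alpha> i else 0)" for i
  have "inj_on single I"
  proof (rule inj_onI)
    fix x y assume "x \<in> I" "y \<in> I" and eq: "single x = single y"
    from eq have "(if x = x then \<alpha> x else 0) = (if x = y then \<alpha> y else 0)"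
      unfolding single_def by (rule fun_cong)
    with \<open>x \<in> I\<close> show "x = y"
      by (auto simp: I_def split: if_splits)
  qed
  moreover have "single ` I \<subseteq> below \<alpha>"
    by (auto simp: single_def)
  ultimately have "finite I"
    using \<open>finite (below \<alpha>)\<close> finite_subset inj_on_finite by blast
  then show False
    using assms by (simp add: finite_support_def I_def)
qed

lemma finite_support_mono:
  assumes "finite_support \<alpha>" "\<forall>i. \<beta> i \<le> \<alpha> i"
  shows "finite_support \<beta>"
proof -
  have "{i. \<beta> i \<noteq> 0} \<subseteq> {i. \<alpha> i \<noteq> 0}"
    using assms(2) by (metis (mono_tags, lifting) Collect_mono le_zero_eq)
  then show ?thesis
    using assms(1) finite_subset unfolding finite_support_def by blast
qed

lemma finite_support_diff: "finite_support \<alpha> \<Longrightarrow> finite_support (\<lambda>i. \<alpha> i - \<beta> i)"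
  by (rule finite_support_mono) auto

lemma finite_support_dec: "finite_support \<alpha> \<Longrightarrow> finite_support (\<alpha>(i := \<alpha> i - 1))"
  by (rule finite_support_mono) auto

lemma expvecs_finite_support: "\<alpha> \<in> expvecs S \<Longrightarrow> finite_support \<alpha>"
  unfolding expvecs_def finite_support_def
  by (rule finite_subset[of _ "{..<S}"]) (auto simp: not_less[symmetric])

lemma expvecs_upd: "i < S \<Longrightarrow> \<alpha>(i := v) \<in> expvecs S \<longleftrightarrow> \<alpha> \<in> expvecs S"
  by (auto simp: expvecs_def)

lemma mps_mult_infinite_support: "\<not> finite_support \<alpha> \<Longrightarrow> mps_mult f g \<alpha> = 0"
  using infinite_below by (simp add: mps_mult_def)

(* Associativity of the product of formal power series: both sides are sums over
   pairs of decompositions of the exponent, matched by (beta, gamma) <-> (gamma, beta - gamma). *)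
lemma mps_mult_assoc: "mps_mult (mps_mult f g) h = mps_mult f (mps_mult g h)"
proof
  fix \<alpha>
  show "mps_mult (mps_mult f g) h \<alpha> = mps_mult f (mps_mult g h) \<alpha>"
  proof (cases "finite_support \<alpha>")
    case False
    then show ?thesis by (simp add: mps_mult_infinite_support)
  next
    case True
    let ?L = "SIGMA \<beta>:below \<alpha>. below \<beta>"
    let ?R = "SIGMA \<gamma>:below \<alpha>. below (\<lambda>i. \<alpha> i - \<gamma> i)"
    have fin_L: "\<And>\<beta>. \<beta> \<in> below \<alpha> \<Longrightarrow> finite (below \<beta>)"
      using True finite_support_mono finite_below by blast
    have fin_R: "\<And>\<gamma>. finite (below (\<lambda>i. \<alpha> i - \<gamma> i))"
      using True finite_support_diff finite_below by blast
    have "mps_mult (mps_mult f g) h \<alpha> =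
        (\<Sum>(\<beta>,\<gamma>)\<in>?L. f \<gamma> * g (\<lambda>i. \<beta> i - \<gamma> i) * h (\<lambda>i. \<alpha> i - \<beta> i))"
      using finite_below[OF True] fin_L
      by (simp add: mps_mult_def sum_distrib_right sum.Sigma)
    also have "\<dots> = (\<Sum>(\<gamma>,\<delta>)\<in>?R. f \<gamma> * (g \<delta> * h (\<lambda>i. \<alpha> i - \<gamma> i - \<delta> i)))"
    proof (rule sum.reindex_bij_witness[where i = "\<lambda>(\<gamma>,\<delta>). (\<lambda>i. \<gamma> i + \<delta> i, \<gamma>)"
                                          and j = "\<lambda>(\<beta>,\<gamma>). (\<gamma>, \<lambda>i. \<beta> i - \<gamma> i)"])
      fix b assume "b \<in> ?R"
      then obtain \<gamma> \<delta> where b: "b = (\<gamma>,\<delta>)" "\<forall>i. \<gamma> i \<le> \<alpha> i" "\<forall>i. \<delta> i \<le> \<alpha> i - \<gamma> i"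
        by auto
      show "(\<lambda>(\<beta>,\<gamma>). (\<gamma>, \<lambda>i. \<beta> i - \<gamma> i)) ((\<lambda>(\<gamma>,\<delta>). (\<lambda>i. \<gamma> i + \<delta> i, \<gamma>)) b) = b"
        using b by auto
      show "(\<lambda>(\<gamma>,\<delta>). (\<lambda>i. \<gamma> i + \<delta> i, \<gamma>)) b \<in> ?L"
        using b by (auto simp: le_diff_conv2 add.commute)
    next
      fix a assume "a \<in> ?L"
      then obtain \<beta> \<gamma> where a: "a = (\<beta>,\<gamma>)" "\<forall>i. \<beta> i \<le> \<alpha> i" "\<forall>i. \<gamma> i \<le> \<beta> i"
        by auto
      show "(\<lambda>(\<gamma>,\<delta>). (\<lambda>i. \<gamma> i + \<delta> i, \<gamma>)) ((\<lambda>(\<beta>,\<gamma>). (\<gamma>, \<lambda>i. \<beta> i - \<gamma> i)) a) = a"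
        using a by auto
      show "(\<lambda>(\<beta>,\<gamma>). (\<gamma>, \<lambda>i. \<beta> i - \<gamma> i)) a \<in> ?R"
        using a by (auto intro: order_trans diff_le_mono)
      have "(\<lambda>i. \<alpha> i - \<gamma> i - (\<beta> i - \<gamma> i)) = (\<lambda>i. \<alpha> i - \<beta> i)"
        using a by (auto simp: fun_eq_iff)
      then show "(case (\<lambda>(\<beta>,\<gamma>). (\<gamma>, \<lambda>i. \<beta> i - \<gamma> i)) a of
                   (\<gamma>,\<delta>) \<Rightarrow> f \<gamma> * (g \<delta> * h (\<lambda>i. \<alpha> i - \<gamma> i - \<delta> i)))
               = (case a of (\<beta>,\<gamma>) \<Rightarrow> f \<gamma> * g (\<lambda>i. \<beta> i - \<gamma> i) * h (\<lambda>i. \<alpha> i - \<beta> i))"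
        using a by (simp add: mult.assoc)
    qed
    also have "\<dots> = mps_mult f (mps_mult g h) \<alpha>"
      using finite_below[OF True] fin_R
      by (simp add: mps_mult_def sum_distrib_left sum.Sigma)
    finally show ?thesis .
  qed
qed

lemma mps_mult_one_left: "finite_support \<alpha> \<Longrightarrow> mps_mult mps_one f \<alpha> = f \<alpha>"
  using finite_below[of \<alpha>]
  by (simp add: mps_mult_def mps_one_def if_distrib[of "\<lambda>x. x * _"] sum.delta cong: if_cong)

lemma mps_mult_var_left:
  assumes "finite_support \<alpha>"
  shows "mps_mult (mps_var i) f \<alpha> = (if 1 \<le> \<alpha> i then f (\<alpha>(i := \<alpha> i - 1)) else 0)"
proof -
  define e where "e = (\<lambda>j::nat. if j = i then 1 else (0::nat))"
  have "mps_mult (mps_var i) f \<alpha> = (\<Sum>\<beta>\<in>below \<alpha>. if \<beta> = e then f (\<lambda>j. \<alpha> j - \<beta> j) else 0)"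
    unfolding mps_mult_def mps_var_def e_def by (rule sum.cong) auto
  also have "\<dots> = (if e \<in> below \<alpha> then f (\<lambda>j. \<alpha> j - e j) else 0)"
    using finite_below[OF assms] by (simp only: sum.delta)
  also have "\<dots> = (if 1 \<le> \<alpha> i then f (\<alpha>(i := \<alpha> i - 1)) else 0)"
  proof -
    have "e \<in> below \<alpha> \<longleftrightarrow> 1 \<le> \<alpha> i" by (auto simp: e_def)
    moreover have "(\<lambda>j. \<alpha> j - e j) = \<alpha>(i := \<alpha> i - 1)" by (auto simp: e_def)
    ultimately show ?thesis by simp
  qed
  finally show ?thesis .
qed

lemma mps_mult_diff_left: "mps_mult (\<lambda>\<beta>. f \<beta> - g \<beta>) h \<alpha> = mps_mult f h \<alpha> - mps_mult g h \<alpha>"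
  by (simp add: mps_mult_def left_diff_distrib sum_subtractf)

lemma mps_mult_diff_right: "mps_mult h (\<lambda>\<beta>. f \<beta> - g \<beta>) \<alpha> = mps_mult h f \<alpha> - mps_mult h g \<alpha>"
  by (simp add: mps_mult_def right_diff_distrib sum_subtractf)

lemma mps_mult_sum_left: "mps_mult (\<lambda>\<beta>. \<Sum>i\<in>A. f i \<beta>) h \<alpha> = (\<Sum>i\<in>A. mps_mult (f i) h \<alpha>)"
  by (simp add: mps_mult_def sum_distrib_right sum.swap[of _ A])

lemma mps_mult_const_coeff: "mps_mult f g (\<lambda>_. 0) = f (\<lambda>_. 0) * g (\<lambda>_. 0)"
proof -
  have "below (\<lambda>_. 0) = {\<lambda>_. 0}" by auto
  then show ?thesis by (simp add: mps_mult_def)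
qed

lemma mps_mult_cong_right:
  assumes "\<And>\<alpha>. finite_support \<alpha> \<Longrightarrow> g \<alpha> = g' \<alpha>"
  shows "mps_mult f g = mps_mult f g'"
proof
  fix \<alpha>
  show "mps_mult f g \<alpha> = mps_mult f g' \<alpha>"
  proof (cases "finite_support \<alpha>")
    case True
    then show ?thesis unfolding mps_mult_def
      by (intro sum.cong) (auto intro!: assms finite_support_diff)
  qed (simp add: mps_mult_infinite_support)
qed

lemma mps_prod_mult:
  assumes "finite_support \<alpha>"
  shows "mps_mult (mps_prod xs F) W \<alpha> = foldr (\<lambda>i acc. mps_mult (F i) acc) xs W \<alpha>"
  using assms
proof (induction xs arbitrary: \<alpha>)
  case Nil
  then show ?case by (simp add: mps_prod_def mps_mult_one_left)
next
  case (Cons x xs)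
  have "mps_mult (mps_prod (x # xs) F) W = mps_mult (F x) (mps_mult (mps_prod xs F) W)"
    by (simp add: mps_prod_def mps_mult_assoc)
  also have "\<dots> = mps_mult (F x) (foldr (\<lambda>i acc. mps_mult (F i) acc) xs W)"
    by (rule mps_mult_cong_right) (rule Cons.IH)
  finally show ?case by simp
qed

lemma mps_mult_cancel_unit:
  assumes zero: "\<forall>\<alpha>\<in>expvecs S. mps_mult D Q \<alpha> = 0" and unit: "D (\<lambda>_. 0) = 1"
  shows "\<forall>\<alpha>\<in>expvecs S. Q \<alpha> = 0"
proof -
  have "Q \<alpha> = 0" if "\<alpha> \<in> expvecs S" "(\<Sum>i<S. \<alpha> i) = n" for n \<alpha>
    using that
  proof (induction n arbitrary: \<alpha> rule: less_induct)
    case (less n)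
    have fin: "finite (below \<alpha>)"
      using less.prems(1) by (intro finite_below expvecs_finite_support)
    have lower: "D \<beta> * Q (\<lambda>i. \<alpha> i - \<beta> i) = 0" if \<beta>: "\<beta> \<in> below \<alpha> - {\<lambda>_. 0}" for \<beta>
    proof -
      obtain k where k: "\<beta> k \<noteq> 0"
        using \<beta> by auto
      moreover have "\<beta> k \<le> \<alpha> k"
        using \<beta> by blast
      ultimately have "\<alpha> k - \<beta> k < \<alpha> k" "k < S"
        using less.prems(1) by (auto simp: expvecs_def not_less[symmetric])
      then have "(\<Sum>i<S. \<alpha> i - \<beta> i) < (\<Sum>i<S. \<alpha> i)"
        by (intro sum_strict_mono_ex1) auto
      moreover have "(\<lambda>i. \<alpha> i - \<beta> i) \<in> expvecs S"
        using less.prems(1) by (simp add: expvecs_def)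
      ultimately have "Q (\<lambda>i. \<alpha> i - \<beta> i) = 0"
        using less.IH less.prems(2) by blast
      then show ?thesis by simp
    qed
    have "0 = mps_mult D Q \<alpha>"
      using zero less.prems(1) by simp
    also have "\<dots> = D (\<lambda>_. 0) * Q (\<lambda>i. \<alpha> i - 0)
                    + (\<Sum>\<beta>\<in>below \<alpha> - {\<lambda>_. 0}. D \<beta> * Q (\<lambda>i. \<alpha> i - \<beta> i))"
      unfolding mps_mult_def using fin by (intro sum.remove) auto
    also have "\<dots> = Q \<alpha>"
    proof -
      have "(\<Sum>\<beta>\<in>below \<alpha> - {\<lambda>_. 0}. D \<beta> * Q (\<lambda>i. \<alpha> i - \<beta> i)) = 0"
        using lower by (intro sum.neutral) blast
      then show ?thesis using unit by simp
    qed
    finally show ?case by simp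
  qed
  then show ?thesis by blast
qed

(* The series summing x^alpha over alpha >= (1,...,1) on 0..<S with alpha_i = 1 for
   i in I, i.e. x_1...x_S / prod_{i<S, i not in I} (1 - x_i). *)
definition pos_box :: "nat \<Rightarrow> nat set \<Rightarrow> mps" where
  "pos_box S I \<alpha> = (if \<alpha> \<in> expvecs S \<and> (\<forall>i<S. 1 \<le> \<alpha> i) \<and> (\<forall>i\<in>I. \<alpha> i = 1) then 1 else 0)"

lemma one_minus_var_pos_box:
  assumes "i < S" "i \<notin> I" "finite_support \<alpha>"
  shows "mps_mult (\<lambda>\<beta>. mps_one \<beta> - mps_var i \<beta>) (pos_box S I) \<alpha> = pos_box S (insert i I) \<alpha>"
proof -
  have lhs: "mps_mult (\<lambda>\<beta>. mps_one \<beta> - mps_var i \<beta>) (pos_box S I) \<alpha>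
      = pos_box S I \<alpha> - (if 1 \<le> \<alpha> i then pos_box S I (\<alpha>(i := \<alpha> i - 1)) else 0)"
    using assms(3) by (simp add: mps_mult_diff_left mps_mult_one_left mps_mult_var_left)
  consider "\<alpha> i = 0" | "\<alpha> i = 1" | "2 \<le> \<alpha> i" by linarith
  then show ?thesis
  proof cases
    case 1
    then show ?thesis using lhs assms(1) by (auto simp: pos_box_def)
  next
    case 2
    have "\<not> (\<forall>j<S. 1 \<le> (\<alpha>(i := \<alpha> i - 1)) j)"
      using 2 assms(1) by force
    then have "pos_box S I (\<alpha>(i := \<alpha> i - 1)) = 0"
      unfolding pos_box_def by (intro if_not_P) blast
    moreover have "pos_box S (insert i I) \<alpha> = pos_box S I \<alpha>"
      using 2 by (simp add: pos_box_def)
    ultimately show ?thesis using lhs by simp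
  next
    case 3
    have "1 \<le> (\<alpha>(i := \<alpha> i - 1)) j \<longleftrightarrow> 1 \<le> \<alpha> j" for j
      using 3 by (cases "j = i") simp_all
    moreover have "(\<forall>j\<in>I. (\<alpha>(i := \<alpha> i - 1)) j = 1) \<longleftrightarrow> (\<forall>j\<in>I. \<alpha> j = 1)"
      using assms(2) by auto
    ultimately have "pos_box S I (\<alpha>(i := \<alpha> i - 1)) = pos_box S I \<alpha>"
      unfolding pos_box_def expvecs_upd[OF assms(1)] by presburger
    moreover have "pos_box S (insert i I) \<alpha> = 0"
      using 3 unfolding pos_box_def by (intro if_not_P) auto
    ultimately show ?thesis using lhs 3 by simp
  qed
qed

lemma foldr_one_minus_vars_pos_box:
  assumes "distinct xs" "set xs \<subseteq> {..<S}" "finite_support \<alpha>"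
  shows "foldr (\<lambda>i acc. mps_mult (\<lambda>\<beta>. mps_one \<beta> - mps_var i \<beta>) acc) xs (pos_box S {}) \<alpha>
       = pos_box S (set xs) \<alpha>"
  using assms
proof (induction xs arbitrary: \<alpha>)
  case Nil
  then show ?case by simp
next
  case (Cons x xs)
  have "foldr (\<lambda>i acc. mps_mult (\<lambda>\<beta>. mps_one \<beta> - mps_var i \<beta>) acc) (x # xs) (pos_box S {})
      = mps_mult (\<lambda>\<beta>. mps_one \<beta> - mps_var x \<beta>) (pos_box S (set xs))"
    using Cons.prems by (simp, intro mps_mult_cong_right Cons.IH) auto
  then show ?case
    using Cons.prems by (simp add: one_minus_var_pos_box)
qed

lemma foldr_vars:
  assumes "distinct xs" "finite_support \<alpha>"
  shows "foldr (\<lambda>i acc. mps_mult (mps_var i) acc) xs mps_one \<alpha>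
       = (if \<alpha> = (\<lambda>j. if j \<in> set xs then 1 else 0) then 1 else 0)"
  using assms
proof (induction xs arbitrary: \<alpha>)
  case Nil
  then show ?case by (simp add: mps_one_def)
next
  case (Cons x xs)
  let ?ind = "\<lambda>A j. if j \<in> A then 1 else (0::nat)"
  have recover: "1 \<le> \<alpha> x \<and> \<alpha>(x := \<alpha> x - 1) = ?ind (set xs) \<longleftrightarrow> \<alpha> = ?ind (set (x # xs))"
  proof
    assume h: "1 \<le> \<alpha> x \<and> \<alpha>(x := \<alpha> x - 1) = ?ind (set xs)"
    show "\<alpha> = ?ind (set (x # xs))"
    proof
      fix j
      have "(\<alpha>(x := \<alpha> x - 1)) j = ?ind (set xs) j" using h by simp
      then show "\<alpha> j = ?ind (set (x # xs)) j"
        using h Cons.prems(1) by (cases "j = x") auto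
    qed
  next
    assume "\<alpha> = ?ind (set (x # xs))"
    then show "1 \<le> \<alpha> x \<and> \<alpha>(x := \<alpha> x - 1) = ?ind (set xs)"
      using Cons.prems(1) by (auto simp: fun_eq_iff)
  qed
  have "foldr (\<lambda>i acc. mps_mult (mps_var i) acc) (x # xs) mps_one \<alpha>
      = (if 1 \<le> \<alpha> x then foldr (\<lambda>i acc. mps_mult (mps_var i) acc) xs mps_one (\<alpha>(x := \<alpha> x - 1)) else 0)"
    using Cons.prems(2) by (simp add: mps_mult_var_left)
  also have "\<dots> = (if 1 \<le> \<alpha> x \<and> \<alpha>(x := \<alpha> x - 1) = ?ind (set xs) then 1 else 0)"
    using Cons.prems finite_support_dec[of \<alpha> x] by (subst Cons.IH) auto
  finally show ?case
    using recover by simp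
qed

lemma FB_num_pos_box:
  assumes "\<alpha> \<in> expvecs S"
  shows "FB_num S \<alpha> = pos_box S {..<S} \<alpha>"
proof -
  have "\<alpha> \<in> expvecs S \<and> (\<forall>i<S. 1 \<le> \<alpha> i) \<and> (\<forall>i\<in>{..<S}. \<alpha> i = 1)
        \<longleftrightarrow> \<alpha> = (\<lambda>j. if j \<in> set [0..<S] then 1 else 0)"
    using assms by (auto simp: expvecs_def fun_eq_iff)
  then show ?thesis
    using foldr_vars[of "[0..<S]"] expvecs_finite_support[OF assms]
    by (simp add: FB_num_def mps_prod_def pos_box_def)
qed

lemma FB_den_const_coeff: "FB_den S (\<lambda>_. 0) = 1"
proof -
  have var: "mps_var i (\<lambda>_. 0) = 0" for i
    by (simp add: mps_var_def fun_eq_iff)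
  have "mps_prod xs (\<lambda>i \<alpha>. mps_one \<alpha> - mps_var i \<alpha>) (\<lambda>_. 0) = 1" for xs
    by (induction xs) (simp_all add: mps_prod_def mps_mult_const_coeff var mps_one_def)
  then show ?thesis
    by (simp add: FB_den_def mps_mult_const_coeff var mps_one_def)
qed

lemma expansion_FB_unique:
  assumes "is_expansion_FB S P" "is_expansion_FB S Q" "\<alpha> \<in> expvecs S"
  shows "P \<alpha> = Q \<alpha>"
proof -
  have "\<forall>\<alpha>\<in>expvecs S. mps_mult (FB_den S) (\<lambda>\<beta>. P \<beta> - Q \<beta>) \<alpha> = 0"
    using assms(1,2) by (simp add: is_expansion_FB_def mps_mult_diff_right)
  from mps_mult_cancel_unit[OF this FB_den_const_coeff] show ?thesis
    using assms(3) by simp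
qed

definition shifted_series :: "nat \<Rightarrow> ((nat \<Rightarrow> nat) \<Rightarrow> real) \<Rightarrow> mps" where
  "shifted_series S K \<alpha> = (if \<alpha> \<in> expvecs S \<and> (\<forall>i<S. 1 \<le> \<alpha> i) then K (\<lambda>i. \<alpha> i - 1) else 0)"

lemma shifted_series_dec:
  assumes "i < S" "1 \<le> \<alpha> i"
  shows "shifted_series S K (\<alpha>(i := \<alpha> i - 1)) =
         (if \<alpha> \<in> expvecs S \<and> (\<forall>j<S. 1 \<le> \<alpha> j) \<and> 2 \<le> \<alpha> i
          then K ((\<lambda>j. \<alpha> j - 1)(i := \<alpha> i - 2)) else 0)"
proof -
  have "(\<forall>j<S. 1 \<le> (\<alpha>(i := \<alpha> i - 1)) j) \<longleftrightarrow> (\<forall>j<S. 1 \<le> \<alpha> j) \<and> 2 \<le> \<alpha> i"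
    using assms by (auto simp: fun_upd_def)
  moreover have "(\<lambda>j. (\<alpha>(i := \<alpha> i - 1)) j - 1) = (\<lambda>j. \<alpha> j - 1)(i := \<alpha> i - 2)"
    by (auto simp: fun_eq_iff)
  ultimately show ?thesis
    unfolding shifted_series_def expvecs_upd[OF assms(1)] by presburger
qed

lemma linear_factor_shifted_series:
  assumes rec: "\<And>c. K c = 1 + (\<Sum>i<S. if 1 \<le> c i then K (c(i := c i - 1)) else 0)"
    and fin: "finite_support \<alpha>"
  shows "mps_mult (\<lambda>\<beta>. mps_one \<beta> - (\<Sum>i<S. mps_var i \<beta>)) (shifted_series S K) \<alpha>
       = pos_box S {} \<alpha>"
proof -
  let ?P = "\<alpha> \<in> expvecs S \<and> (\<forall>j<S. 1 \<le> \<alpha> j)"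
  define c where "c = (\<lambda>j. \<alpha> j - 1)"
  have "mps_mult (\<lambda>\<beta>. mps_one \<beta> - (\<Sum>i<S. mps_var i \<beta>)) (shifted_series S K) \<alpha>
      = shifted_series S K \<alpha>
        - (\<Sum>i<S. if 1 \<le> \<alpha> i then shifted_series S K (\<alpha>(i := \<alpha> i - 1)) else 0)"
    using fin by (simp add: mps_mult_diff_left mps_mult_one_left mps_mult_sum_left mps_mult_var_left)
  also have "(\<Sum>i<S. if 1 \<le> \<alpha> i then shifted_series S K (\<alpha>(i := \<alpha> i - 1)) else 0)
           = (if ?P then \<Sum>i<S. if 1 \<le> c i then K (c(i := c i - 1)) else 0 else 0)"
  proof (cases ?P)
    case True
    have "(if 1 \<le> \<alpha> i then shifted_series S K (\<alpha>(i := \<alpha> i - 1)) else 0)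
        = (if 1 \<le> c i then K (c(i := c i - 1)) else 0)" if "i < S" for i
    proof -
      have "1 \<le> \<alpha> i" using True that by blast
      moreover have "(\<lambda>j. \<alpha> j - 1)(i := \<alpha> i - 2) = c(i := c i - 1)"
        by (auto simp: c_def fun_eq_iff)
      moreover have "2 \<le> \<alpha> i \<longleftrightarrow> 1 \<le> c i"
        by (auto simp: c_def)
      ultimately show ?thesis
        using shifted_series_dec[OF that, of \<alpha> K] True by simp
    qed
    then show ?thesis
      using True by simp
  next
    case False
    have "(if 1 \<le> \<alpha> i then shifted_series S K (\<alpha>(i := \<alpha> i - 1)) else 0) = 0" if "i < S" for i
      using shifted_series_dec[OF that, of \<alpha> K] False by auto
    then have "(\<Sum>i<S. if 1 \<le> \<alpha> i then shifted_series S K (\<alpha>(i := \<alpha> i - 1)) else 0) = 0"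
      by (intro sum.neutral) simp
    then show ?thesis
      by (simp only: if_not_P[OF False])
  qed
  also have "shifted_series S K \<alpha> - \<dots> = pos_box S {} \<alpha>"
    using rec[of c] by (auto simp: shifted_series_def pos_box_def c_def)
  finally show ?thesis .
qed

theorem shifted_series_is_expansion:
  assumes rec: "\<And>c. K c = 1 + (\<Sum>i<S. if 1 \<le> c i then K (c(i := c i - 1)) else 0)"
  shows "is_expansion_FB S (shifted_series S K)"
  unfolding is_expansion_FB_def
proof
  fix \<alpha> assume \<alpha>: "\<alpha> \<in> expvecs S"
  let ?A = "mps_prod [0..<S] (\<lambda>i \<beta>. mps_one \<beta> - mps_var i \<beta>)"
  let ?L = "\<lambda>\<beta>. mps_one \<beta> - (\<Sum>i<S. mps_var i \<beta>)"
  have "mps_mult (FB_den S) (shifted_series S K) \<alpha> = mps_mult ?A (mps_mult ?L (shifted_series S K)) \<alpha>"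
    by (simp add: FB_den_def mps_mult_assoc)
  also have "\<dots> = mps_mult ?A (pos_box S {}) \<alpha>"
  proof -
    have "mps_mult ?A (mps_mult ?L (shifted_series S K)) = mps_mult ?A (pos_box S {})"
      by (rule mps_mult_cong_right) (rule linear_factor_shifted_series[OF rec])
    then show ?thesis by simp
  qed
  also have "\<dots> = foldr (\<lambda>i acc. mps_mult (\<lambda>\<beta>. mps_one \<beta> - mps_var i \<beta>) acc) [0..<S] (pos_box S {}) \<alpha>"
    by (rule mps_prod_mult[OF expvecs_finite_support[OF \<alpha>]])
  also have "\<dots> = pos_box S (set [0..<S]) \<alpha>"
    by (rule foldr_one_minus_vars_pos_box) (auto intro: expvecs_finite_support[OF \<alpha>])
  also have "\<dots> = pos_box S {..<S} \<alpha>"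
    by (simp add: atLeast0LessThan)
  also have "\<dots> = FB_num S \<alpha>"
    using FB_num_pos_box[OF \<alpha>] by simp
  finally show "mps_mult (FB_den S) (shifted_series S K) \<alpha> = FB_num S \<alpha>" .
qed

lemma card_filter_bij:
  assumes "bij_betw h X Y"
  shows "card {x\<in>X. Q (h x)} = card {y\<in>Y. Q y}"
proof -
  have "bij_betw h {x\<in>X. Q (h x)} {y\<in>Y. Q y}"
    using assms by (auto simp: bij_betw_def inj_on_def)
  then show ?thesis by (rule bij_betw_same_card)
qed

lemma bij_betw_PiE_precompose:
  assumes bij: "bij_betw h X Y"
  shows "bij_betw (\<lambda>g. \<lambda>x\<in>X. g (h x)) (Y \<rightarrow>\<^sub>E Z) (X \<rightarrow>\<^sub>E Z)"
proof (rule bij_betw_byWitness[where f' = "\<lambda>f. \<lambda>y\<in>Y. f (inv_into X h y)"])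
  have hX: "h x \<in> Y" if "x \<in> X" for x
    using bij_betwE[OF bij] that by blast
  have invY: "inv_into X h y \<in> X" "h (inv_into X h y) = y" if "y \<in> Y" for y
    using that bij_betw_imp_surj_on[OF bij] by (blast intro: inv_into_into, blast intro: f_inv_into_f)
  have invX: "inv_into X h (h x) = x" if "x \<in> X" for x
    using bij that by (rule bij_betw_inv_into_left)
  show "\<forall>g\<in>Y \<rightarrow>\<^sub>E Z. (\<lambda>y\<in>Y. (\<lambda>x\<in>X. g (h x)) (inv_into X h y)) = g"
  proof
    fix g assume g: "g \<in> Y \<rightarrow>\<^sub>E Z"
    show "(\<lambda>y\<in>Y. (\<lambda>x\<in>X. g (h x)) (inv_into X h y)) = g"
    proof
      fix y show "(\<lambda>y\<in>Y. (\<lambda>x\<in>X. g (h x)) (inv_into X h y)) y = g y"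
        using invY[of y] PiE_arb[OF g, of y] by (cases "y \<in> Y") simp_all
    qed
  qed
  show "\<forall>f\<in>X \<rightarrow>\<^sub>E Z. (\<lambda>x\<in>X. (\<lambda>y\<in>Y. f (inv_into X h y)) (h x)) = f"
  proof
    fix f assume f: "f \<in> X \<rightarrow>\<^sub>E Z"
    show "(\<lambda>x\<in>X. (\<lambda>y\<in>Y. f (inv_into X h y)) (h x)) = f"
    proof
      fix x show "(\<lambda>x\<in>X. (\<lambda>y\<in>Y. f (inv_into X h y)) (h x)) x = f x"
        using hX[of x] invX[of x] PiE_arb[OF f, of x] by (cases "x \<in> X") simp_all
    qed
  qed
  show "(\<lambda>g. \<lambda>x\<in>X. g (h x)) ` (Y \<rightarrow>\<^sub>E Z) \<subseteq> X \<rightarrow>\<^sub>E Z"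
    unfolding image_subset_iff restrict_PiE_iff using hX PiE_mem by blast
  show "(\<lambda>f. \<lambda>y\<in>Y. f (inv_into X h y)) ` (X \<rightarrow>\<^sub>E Z) \<subseteq> Y \<rightarrow>\<^sub>E Z"
    unfolding image_subset_iff restrict_PiE_iff using invY(1) PiE_mem by blast
qed

lemma card_PiE_transport:
  assumes bij: "bij_betw h X Y"
    and equiv: "\<And>g. g \<in> Y \<rightarrow>\<^sub>E Z \<Longrightarrow> P (\<lambda>x\<in>X. g (h x)) \<longleftrightarrow> Q g"
  shows "card {f \<in> X \<rightarrow>\<^sub>E Z. P f} = card {g \<in> Y \<rightarrow>\<^sub>E Z. Q g}"
proof -
  have "{g \<in> Y \<rightarrow>\<^sub>E Z. Q g} = {g \<in> Y \<rightarrow>\<^sub>E Z. P (\<lambda>x\<in>X. g (h x))}"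
    using equiv by blast
  then show ?thesis
    using card_filter_bij[OF bij_betw_PiE_precompose[OF bij], where Q = P] by simp
qed

definition deals :: "nat \<Rightarrow> 'a set \<Rightarrow> (nat \<Rightarrow> nat) \<Rightarrow> ('a \<Rightarrow> nat) set" where
  "deals S X b = {f \<in> X \<rightarrow>\<^sub>E {0..<S}. \<forall>i<S. card {x\<in>X. f x = i} = b i}"

lemma finite_deals: "finite X \<Longrightarrow> finite (deals S X b)"
  unfolding deals_def by (rule finite_subset[of _ "X \<rightarrow>\<^sub>E {0..<S}"]) (auto intro: finite_PiE)

lemma card_fibre_precompose:
  assumes bij: "bij_betw h X Y"
  shows "card {x\<in>X. (\<lambda>x\<in>X. g (h x)) x = i} = card {y\<in>Y. g y = i}"
proof -
  have "{x\<in>X. (\<lambda>x\<in>X. g (h x)) x = i} = {x\<in>X. g (h x) = i}"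
    by auto
  then show ?thesis
    using card_filter_bij[OF bij, where Q = "\<lambda>y. g y = i"] by simp
qed

lemma card_deals_bij:
  assumes bij: "bij_betw h X Y"
  shows "card (deals S X b) = card (deals S Y b)"
  unfolding deals_def
  by (rule card_PiE_transport[OF bij]) (simp only: card_fibre_precompose[OF bij])

lemma card_deals_same_size:
  assumes "finite X" "finite Y" "card X = card Y"
  shows "card (deals S X b) = card (deals S Y b)"
proof -
  obtain h where "bij_betw h X Y"
    using finite_same_card_bij[OF assms] by blast
  then show ?thesis by (rule card_deals_bij)
qed

lemma cards_Sigma: "cards S b = (SIGMA j:{..<S}. {..<b j})"
  by (auto simp: cards_def)

lemma finite_cards: "finite (cards S b)"
  by (simp add: cards_Sigma)

lemma card_cards: "card (cards S b) = (\<Sum>i<S. b i)"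
  by (simp add: cards_Sigma)

lemma cards_cong: "(\<And>i. i < S \<Longrightarrow> b i = b' i) \<Longrightarrow> cards S b = cards S b'"
  by (auto simp: cards_def)

definition num_deals :: "nat \<Rightarrow> (nat \<Rightarrow> nat) \<Rightarrow> nat" where
  "num_deals S b = card (deals S (cards S b) b)"

lemma num_deals_zero:
  assumes "\<And>i. i < S \<Longrightarrow> b i = 0"
  shows "num_deals S b = 1"
proof -
  have "cards S b = {}"
    using assms by (auto simp: cards_def)
  moreover have "deals S {} b = {\<lambda>_. undefined}"
    using assms by (auto simp: deals_def)
  ultimately have "deals S (cards S b) b = {\<lambda>_. undefined}"
    by simp
  then show ?thesis
    by (simp add: num_deals_def)
qed

lemma card_fibre_remove:
  assumes "finite X" "x0 \<in> X"
  shows "card {x\<in>X. f x = j} = card {x\<in>X - {x0}. f x = j} + (if f x0 = j then 1 else 0)"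
proof (cases "f x0 = j")
  case True
  then have "{x\<in>X. f x = j} = insert x0 {x\<in>X - {x0}. f x = j}"
    using assms(2) by auto
  then show ?thesis
    using assms(1) True by simp
next
  case False
  then have "{x\<in>X. f x = j} = {x\<in>X - {x0}. f x = j}"
    by auto
  then show ?thesis
    using False by simp
qed

lemma deal_restrict_remove:
  assumes fin: "finite X" and x0: "x0 \<in> X" and f: "f \<in> deals S X b" "f x0 = i"
  shows "restrict f (X - {x0}) \<in> deals S (X - {x0}) (b(i := b i - 1))"
proof -
  have "card {x\<in>X - {x0}. restrict f (X - {x0}) x = j} = (b(i := b i - 1)) j" if "j < S" for j
  proof -
    have "{x\<in>X - {x0}. restrict f (X - {x0}) x = j} = {x\<in>X - {x0}. f x = j}"
      by auto
    then show ?thesis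
      using card_fibre_remove[OF fin x0, of f j] f that by (cases "j = i") (simp_all add: deals_def)
  qed
  moreover have "restrict f (X - {x0}) \<in> (X - {x0}) \<rightarrow>\<^sub>E {0..<S}"
    using f(1) by (auto simp: deals_def)
  ultimately show ?thesis
    by (simp add: deals_def)
qed

lemma deal_extend:
  assumes fin: "finite X" and x0: "x0 \<in> X" and i: "i < S" "1 \<le> b i"
    and g: "g \<in> deals S (X - {x0}) (b(i := b i - 1))"
  shows "g(x0 := i) \<in> deals S X b"
proof -
  have gP: "g \<in> (X - {x0}) \<rightarrow>\<^sub>E {0..<S}"
    using g by (simp add: deals_def)
  have "card {x\<in>X. (g(x0 := i)) x = j} = b j" if "j < S" for j
  proof -
    have "{x\<in>X - {x0}. (g(x0 := i)) x = j} = {x\<in>X - {x0}. g x = j}"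
      by auto
    then show ?thesis
      using card_fibre_remove[OF fin x0, of "g(x0 := i)" j] g that i
      by (cases "j = i") (simp_all add: deals_def)
  qed
  moreover have "g(x0 := i) \<in> X \<rightarrow>\<^sub>E {0..<S}"
    using PiE_fun_upd[OF _ gP, of i x0] i x0 by (simp add: insert_absorb)
  ultimately show ?thesis
    by (simp add: deals_def)
qed

lemma deals_remove_card:
  assumes fin: "finite X" and x0: "x0 \<in> X" and i: "i < S" "1 \<le> b i"
  shows "card {f \<in> deals S X b. f x0 = i} = card (deals S (X - {x0}) (b(i := b i - 1)))"
proof (rule bij_betw_same_card, rule bij_betw_byWitness[where f = "\<lambda>f. restrict f (X - {x0})"
                                                        and f' = "\<lambda>g. g(x0 := i)"])
  show "\<forall>f\<in>{f \<in> deals S X b. f x0 = i}. (restrict f (X - {x0}))(x0 := i) = f"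
  proof
    fix f assume "f \<in> {f \<in> deals S X b. f x0 = i}"
    then have f: "f \<in> X \<rightarrow>\<^sub>E {0..<S}" "f x0 = i"
      by (auto simp: deals_def)
    show "(restrict f (X - {x0}))(x0 := i) = f"
    proof
      fix x show "((restrict f (X - {x0}))(x0 := i)) x = f x"
        using f PiE_arb[OF f(1), of x] by (cases "x = x0"; cases "x \<in> X") auto
    qed
  qed
  show "\<forall>g\<in>deals S (X - {x0}) (b(i := b i - 1)). restrict (g(x0 := i)) (X - {x0}) = g"
  proof
    fix g assume "g \<in> deals S (X - {x0}) (b(i := b i - 1))"
    then have g: "g \<in> (X - {x0}) \<rightarrow>\<^sub>E {0..<S}"
      by (simp add: deals_def)
    show "restrict (g(x0 := i)) (X - {x0}) = g"
    proof
      fix x show "restrict (g(x0 := i)) (X - {x0}) x = g x"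
        using PiE_arb[OF g, of x] by (cases "x \<in> X - {x0}") auto
    qed
  qed
  show "(\<lambda>f. restrict f (X - {x0})) ` {f \<in> deals S X b. f x0 = i} \<subseteq> deals S (X - {x0}) (b(i := b i - 1))"
    using deal_restrict_remove[OF fin x0] by blast
  show "(\<lambda>g. g(x0 := i)) ` deals S (X - {x0}) (b(i := b i - 1)) \<subseteq> {f \<in> deals S X b. f x0 = i}"
    using deal_extend[where b = b, OF fin x0 i] by auto
qed

lemma card_deals_by_value:
  assumes "finite X" "x0 \<in> X"
  shows "card (deals S X b) = (\<Sum>i<S. card {f \<in> deals S X b. f x0 = i})"
proof -
  have "(\<lambda>f. f x0) ` deals S X b \<subseteq> {..<S}"
    using assms(2) by (auto simp: deals_def dest: PiE_mem)
  then show ?thesis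
    using sum.group[OF finite_deals[OF assms(1)] finite_lessThan, where g = "\<lambda>f. f x0" and h = "\<lambda>_. 1::nat"]
    by simp
qed

(* The multinomial recursion, obtained by classifying deals by the receiver of a
   fixed card. *)
lemma num_deals_rec:
  assumes "\<exists>i<S. 1 \<le> b i"
  shows "num_deals S b = (\<Sum>i<S. if 1 \<le> b i then num_deals S (b(i := b i - 1)) else 0)"
proof -
  obtain i0 where i0: "i0 < S" "1 \<le> b i0"
    using assms by blast
  define X where "X = cards S b"
  define x0 where "x0 = (i0, 0::nat)"
  have fin: "finite X"
    by (simp add: X_def finite_cards)
  have x0: "x0 \<in> X"
    using i0 by (simp add: X_def x0_def cards_def)
  have slice: "card {f \<in> deals S X b. f x0 = i} = (if 1 \<le> b i then num_deals S (b(i := b i - 1)) else 0)"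
    if i: "i < S" for i
  proof (cases "1 \<le> b i")
    case True
    have "card (X - {x0}) = card (cards S (b(i := b i - 1)))"
      using x0 i True by (simp add: X_def card_cards card_Diff_singleton sum.remove[of "{..<S}" i])
    then have "card (deals S (X - {x0}) (b(i := b i - 1))) = num_deals S (b(i := b i - 1))"
      unfolding num_deals_def using fin by (intro card_deals_same_size) (simp_all add: finite_cards)
    then show ?thesis
      using deals_remove_card[where b = b, OF fin x0 i True] True by simp
  next
    case False
    have "f x0 \<noteq> i" if "f \<in> deals S X b" for f
    proof
      assume "f x0 = i"
      then have "{x\<in>X. f x = i} \<noteq> {}" using x0 by blast
      moreover have "finite {x\<in>X. f x = i}" using fin by simp
      ultimately have "card {x\<in>X. f x = i} \<noteq> 0" by simp
      then show False using that i False by (simp add: deals_def)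
    qed
    then have "{f \<in> deals S X b. f x0 = i} = {}"
      by blast
    then show ?thesis
      by (simp only: card.empty if_not_P[OF False])
  qed
  have "num_deals S b = (\<Sum>i<S. card {f \<in> deals S X b. f x0 = i})"
    unfolding num_deals_def X_def[symmetric] by (rule card_deals_by_value[OF fin x0])
  also have "\<dots> = (\<Sum>i<S. if 1 \<le> b i then num_deals S (b(i := b i - 1)) else 0)"
    using slice by (intro sum.cong) simp_all
  finally show ?thesis .
qed

definition derangements :: "nat \<Rightarrow> (nat \<times> nat) set \<Rightarrow> (nat \<times> nat \<Rightarrow> nat) set" where
  "derangements S R = {g \<in> R \<rightarrow>\<^sub>E {0..<S}. (\<forall>x\<in>R. g x \<noteq> fst x) \<and>
      (\<forall>i<S. card {x\<in>R. g x = i} = card {x\<in>R. fst x = i})}"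

lemma finite_derangements: "finite R \<Longrightarrow> finite (derangements S R)"
  unfolding derangements_def by (rule finite_subset[of _ "R \<rightarrow>\<^sub>E {0..<S}"]) (auto intro: finite_PiE)

definition row_count :: "(nat \<times> nat) set \<Rightarrow> nat \<Rightarrow> nat" where
  "row_count R i = card {x\<in>R. fst x = i}"

lemma card_row: "card {t. (i, t) \<in> R} = row_count R i"
proof -
  have "card {t. (i, t) \<in> R} = card (Pair i ` {t. (i, t) \<in> R})"
    by (rule card_image[symmetric]) (simp add: inj_on_def)
  also have "Pair i ` {t. (i, t) \<in> R} = {x\<in>R. fst x = i}"
    by force
  finally show ?thesis
    by (simp add: row_count_def)
qed

lemma row_count_cards: "i < S \<Longrightarrow> row_count (cards S c) i = c i"
proof -
  assume "i < S"
  then have "{t. (i, t) \<in> cards S c} = {..<c i}"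
    by (auto simp: cards_def)
  then show ?thesis
    using card_row[of i "cards S c"] by simp
qed

lemma E_derangements: "E S n = card (derangements S (cards S n))"
proof -
  have "(\<forall>i<S. card {x\<in>cards S n. g x = i} = n i) \<longleftrightarrow>
        (\<forall>i<S. card {x\<in>cards S n. g x = i} = card {x\<in>cards S n. fst x = i})" for g
    using row_count_cards[of _ S n] unfolding row_count_def by auto
  then show ?thesis
    unfolding E_def derangements_def by simp
qed

lemma card_derangements_bij:
  assumes bij: "bij_betw h X Y" and owner: "\<And>x. fst (h x) = fst x"
  shows "card (derangements S X) = card (derangements S Y)"
  unfolding derangements_def
proof (rule card_PiE_transport[OF bij])
  fix g :: "nat \<times> nat \<Rightarrow> nat"
  have "(\<forall>x\<in>X. (\<lambda>x\<in>X. g (h x)) x \<noteq> fst x) \<longleftrightarrow> (\<forall>x\<in>X. g (h x) \<noteq> fst (h x))"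
    using owner by simp
  also have "\<dots> \<longleftrightarrow> (\<forall>y\<in>Y. g y \<noteq> fst y)"
    using bij_betw_imp_surj_on[OF bij] by blast
  finally have moved: "(\<forall>x\<in>X. (\<lambda>x\<in>X. g (h x)) x \<noteq> fst x) \<longleftrightarrow> (\<forall>y\<in>Y. g y \<noteq> fst y)" .
  have rows: "card {x\<in>X. fst x = i} = card {y\<in>Y. fst y = i}" for i
    using card_filter_bij[OF bij, where Q = "\<lambda>y. fst y = i"] owner by simp
  show "((\<forall>x\<in>X. (\<lambda>x\<in>X. g (h x)) x \<noteq> fst x) \<and>
          (\<forall>i<S. card {x\<in>X. (\<lambda>x\<in>X. g (h x)) x = i} = card {x\<in>X. fst x = i}))
      \<longleftrightarrow> ((\<forall>y\<in>Y. g y \<noteq> fst y) \<and> (\<forall>i<S. card {y\<in>Y. g y = i} = card {y\<in>Y. fst y = i}))"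
    by (simp only: moved rows card_fibre_precompose[OF bij])
qed

lemma bij_betw_Sigma_fibres:
  assumes "\<And>j. j \<in> I \<Longrightarrow> bij_betw (h j) (U j) (V j)"
  shows "bij_betw (\<lambda>(j, t). (j, h j t)) (SIGMA j:I. U j) (SIGMA j:I. V j)"
  unfolding bij_betw_def
proof
  show "inj_on (\<lambda>(j, t). (j, h j t)) (SIGMA j:I. U j)"
    using assms by (auto simp: inj_on_def bij_betw_def)
  show "(\<lambda>(j, t). (j, h j t)) ` (SIGMA j:I. U j) = (SIGMA j:I. V j)"
  proof
    show "(\<lambda>(j, t). (j, h j t)) ` (SIGMA j:I. U j) \<subseteq> (SIGMA j:I. V j)"
      using assms by (auto dest: bij_betwE)
    show "(SIGMA j:I. V j) \<subseteq> (\<lambda>(j, t). (j, h j t)) ` (SIGMA j:I. U j)"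
    proof
      fix p assume "p \<in> (SIGMA j:I. V j)"
      then obtain j t where p: "p = (j, t)" "j \<in> I" "t \<in> V j" by blast
      then obtain u where "u \<in> U j" "t = h j u"
        using assms bij_betw_imp_surj_on by blast
      then show "p \<in> (\<lambda>(j, t). (j, h j t)) ` (SIGMA j:I. U j)"
        using p by force
    qed
  qed
qed

(* Any finite set of cards can be relabelled, within each row, as the standard card set
   with the same row counts; hence it has E(row counts) block derangements. *)
lemma row_preserving_bij:
  assumes fin: "finite R" and owners: "\<forall>x\<in>R. fst x < S"
  obtains h where "bij_betw h (cards S (row_count R)) R" "\<And>x. fst (h x) = fst x"
proof -
  have "\<exists>g. bij_betw g {..<row_count R j} {t. (j, t) \<in> R}" for j
  proof -
    have "{t. (j, t) \<in> R} = snd ` {x\<in>R. fst x = j}"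
      by force
    then have "finite {t. (j, t) \<in> R}"
      using fin by simp
    then show ?thesis
      by (intro finite_same_card_bij) (simp_all add: card_row)
  qed
  then obtain g where g: "\<And>j. bij_betw (g j) {..<row_count R j} {t. (j, t) \<in> R}"
    by metis
  have "bij_betw (\<lambda>(j, t). (j, g j t)) (cards S (row_count R)) (SIGMA j:{..<S}. {t. (j, t) \<in> R})"
    unfolding cards_Sigma by (rule bij_betw_Sigma_fibres) (rule g)
  moreover have "(SIGMA j:{..<S}. {t. (j, t) \<in> R}) = R"
    using owners by auto
  ultimately have "bij_betw (\<lambda>(j, t). (j, g j t)) (cards S (row_count R)) R"
    by simp
  moreover have "fst ((\<lambda>(j, t). (j, g j t)) x) = fst x" for x
    by (simp add: case_prod_beta)
  ultimately show ?thesis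
    using that by blast
qed

lemma card_derangements:
  assumes "finite R" "\<forall>x\<in>R. fst x < S"
  shows "card (derangements S R) = E S (row_count R)"
proof -
  obtain h where "bij_betw h (cards S (row_count R)) R" "\<And>x. fst (h x) = fst x"
    using row_preserving_bij[OF assms] by blast
  then show ?thesis
    by (simp add: E_derangements card_derangements_bij)
qed

lemma balanced_iff_moved_balanced:
  assumes fin: "finite X" and R: "R \<subseteq> X" and fixed: "\<forall>x\<in>X - R. f x = fst x"
  shows "card {x\<in>X. f x = i} = card {x\<in>X. fst x = i} \<longleftrightarrow>
         card {x\<in>R. f x = i} = card {x\<in>R. fst x = i}"
proof -
  have split: "card {x\<in>X. Q x} = card {x\<in>R. Q x} + card {x\<in>X - R. Q x}" for Q
  proof -
    have "{x\<in>X. Q x} = {x\<in>R. Q x} \<union> {x\<in>X - R. Q x}"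
      using R by blast
    moreover have "finite R"
      using fin R finite_subset by blast
    ultimately show ?thesis
      using fin by (simp add: card_Un_disjoint disjoint_iff)
  qed
  have "{x\<in>X - R. f x = i} = {x\<in>X - R. fst x = i}"
    using fixed by auto
  then show ?thesis
    using split[of "\<lambda>x. f x = i"] split[of "\<lambda>x. fst x = i"] by simp
qed

lemma deals_cards_iff:
  "f \<in> deals S (cards S c) c \<longleftrightarrow> f \<in> cards S c \<rightarrow>\<^sub>E {0..<S} \<and>
     (\<forall>i<S. card {x\<in>cards S c. f x = i} = card {x\<in>cards S c. fst x = i})"
  using row_count_cards[of _ S c] by (auto simp: deals_def row_count_def)

lemma moved_part_derangement:
  assumes fin: "finite X" and f: "f \<in> X \<rightarrow>\<^sub>E {0..<S}"
    and balanced: "\<forall>i<S. card {x\<in>X. f x = i} = card {x\<in>X. fst x = i}"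
  shows "restrict f {x\<in>X. f x \<noteq> fst x} \<in> derangements S {x\<in>X. f x \<noteq> fst x}"
proof -
  let ?R = "{x\<in>X. f x \<noteq> fst x}"
  have sub: "?R \<subseteq> X" and fixed: "\<forall>x\<in>X - ?R. f x = fst x"
    by auto
  have "card {x\<in>?R. restrict f ?R x = i} = card {x\<in>?R. f x = i}" for i
    by (rule arg_cong[where f = card]) auto
  then show ?thesis
    using f balanced balanced_iff_moved_balanced[OF fin sub fixed]
    by (auto simp: derangements_def)
qed

lemma glue_balanced:
  assumes fin: "finite X" and owner: "\<forall>x\<in>X. fst x < S"
    and R: "R \<subseteq> X" and g: "g \<in> derangements S R"
  defines "f \<equiv> \<lambda>x\<in>X. if x \<in> R then g x else fst x"
  shows "f \<in> X \<rightarrow>\<^sub>E {0..<S}" and "\<forall>i<S. card {x\<in>X. f x = i} = card {x\<in>X. fst x = i}"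
proof -
  have gP: "g \<in> R \<rightarrow>\<^sub>E {0..<S}" "\<forall>i<S. card {x\<in>R. g x = i} = card {x\<in>R. fst x = i}"
    using g by (auto simp: derangements_def)
  show "f \<in> X \<rightarrow>\<^sub>E {0..<S}"
    using PiE_mem[OF gP(1)] owner by (auto simp: f_def)
  have fixed: "\<forall>x\<in>X - R. f x = fst x"
    by (simp add: f_def)
  have "card {x\<in>R. f x = i} = card {x\<in>R. g x = i}" for i
    using R by (intro arg_cong[where f = card]) (auto simp: f_def)
  then show "\<forall>i<S. card {x\<in>X. f x = i} = card {x\<in>X. fst x = i}"
    using gP(2) balanced_iff_moved_balanced[OF fin R fixed] by simp
qed

(* Every deal is determined by the set of cards that change hands together with a
   block derangement of that set. *)
lemma num_deals_split: "num_deals S c = (\<Sum>R\<in>Pow (cards S c). card (derangements S R))"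
proof -
  define X where "X = cards S c"
  define moved where "moved f = {x\<in>X. f x \<noteq> fst x}" for f :: "nat \<times> nat \<Rightarrow> nat"
  define glue where "glue = (\<lambda>(R, g). \<lambda>x\<in>X. if x \<in> R then g x else fst x)"
  have fin: "finite X"
    by (simp add: X_def finite_cards)
  have owner: "\<forall>x\<in>X. fst x < S"
    by (auto simp: X_def cards_def)
  have deals_X: "f \<in> deals S X c \<longleftrightarrow> f \<in> X \<rightarrow>\<^sub>E {0..<S} \<and>
      (\<forall>i<S. card {x\<in>X. f x = i} = card {x\<in>X. fst x = i})" for f
    unfolding X_def by (rule deals_cards_iff)
  have "bij_betw (\<lambda>f. (moved f, restrict f (moved f))) (deals S X c) (SIGMA R:Pow X. derangements S R)"
  proof (rule bij_betw_byWitness[where f' = glue])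
    show "\<forall>f\<in>deals S X c. glue (moved f, restrict f (moved f)) = f"
    proof
      fix f assume "f \<in> deals S X c"
      then have f: "f \<in> X \<rightarrow>\<^sub>E {0..<S}" by (simp add: deals_X)
      show "glue (moved f, restrict f (moved f)) = f"
      proof
        fix x show "glue (moved f, restrict f (moved f)) x = f x"
          using PiE_arb[OF f, of x] by (cases "x \<in> X") (auto simp: glue_def moved_def)
      qed
    qed
    show "\<forall>p\<in>(SIGMA R:Pow X. derangements S R). (moved (glue p), restrict (glue p) (moved (glue p))) = p"
    proof
      fix p assume "p \<in> (SIGMA R:Pow X. derangements S R)"
      then obtain R g where p: "p = (R, g)" "R \<subseteq> X" "g \<in> derangements S R"
        by blast
      then have g: "g \<in> R \<rightarrow>\<^sub>E {0..<S}" "\<forall>x\<in>R. g x \<noteq> fst x"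
        by (auto simp: derangements_def)
      have R: "moved (glue p) = R"
        using p g(2) by (auto simp: glue_def moved_def)
      have "restrict (glue p) R = g"
      proof
        fix x show "restrict (glue p) R x = g x"
          using PiE_arb[OF g(1), of x] p by (cases "x \<in> R") (auto simp: glue_def)
      qed
      then show "(moved (glue p), restrict (glue p) (moved (glue p))) = p"
        using R p(1) by simp
    qed
    show "(\<lambda>f. (moved f, restrict f (moved f))) ` deals S X c \<subseteq> (SIGMA R:Pow X. derangements S R)"
      using moved_part_derangement[OF fin] by (auto simp: deals_X moved_def)
    show "glue ` (SIGMA R:Pow X. derangements S R) \<subseteq> deals S X c"
      using glue_balanced[OF fin owner] by (auto simp: deals_X glue_def)
  qed
  then have "card (deals S X c) = card (SIGMA R:Pow X. derangements S R)"
    by (rule bij_betw_same_card)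
  also have "\<dots> = (\<Sum>R\<in>Pow X. card (derangements S R))"
    using fin by (intro card_SigmaI) (auto intro: finite_derangements finite_subset)
  finally show ?thesis
    by (simp add: num_deals_def X_def)
qed

definition dominated :: "nat \<Rightarrow> (nat \<Rightarrow> nat) \<Rightarrow> (nat \<Rightarrow> nat) set" where
  "dominated S c = PiE {0..<S} (\<lambda>i. {0..c i})"

lemma finite_dominated: "finite (dominated S c)"
  by (simp add: dominated_def finite_PiE)

lemma dominated_iff:
  "b \<in> dominated S c \<longleftrightarrow> (\<forall>j<S. b j \<le> c j) \<and> (\<forall>j. \<not> j < S \<longrightarrow> b j = undefined)"
  by (auto simp: dominated_def PiE_iff extensional_def)

definition row_counts :: "nat \<Rightarrow> (nat \<times> nat) set \<Rightarrow> nat \<Rightarrow> nat" where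
  "row_counts S R = restrict (row_count R) {0..<S}"

(* A set of cards is the same as a choice of a subset of every hand; so the sets with
   prescribed row counts n are counted by a product of binomial coefficients. *)
lemma bij_betw_rows:
  "bij_betw (\<lambda>R. \<lambda>i\<in>{0..<S}. {t. (i, t) \<in> R}) (Pow (cards S c)) (PiE {0..<S} (\<lambda>i. Pow {..<c i}))"
proof (rule bij_betw_byWitness[where f' = "\<lambda>F. SIGMA i:{0..<S}. F i"])
  show "\<forall>R\<in>Pow (cards S c). (SIGMA i:{0..<S}. (\<lambda>i\<in>{0..<S}. {t. (i, t) \<in> R}) i) = R"
    by (auto simp: cards_def)
  show "\<forall>F\<in>PiE {0..<S} (\<lambda>i. Pow {..<c i}). (\<lambda>i\<in>{0..<S}. {t. (i, t) \<in> (SIGMA i:{0..<S}. F i)}) = F"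
  proof
    fix F assume F: "F \<in> PiE {0..<S} (\<lambda>i. Pow {..<c i})"
    show "(\<lambda>i\<in>{0..<S}. {t. (i, t) \<in> (SIGMA i:{0..<S}. F i)}) = F"
    proof
      fix i show "(\<lambda>i\<in>{0..<S}. {t. (i, t) \<in> (SIGMA i:{0..<S}. F i)}) i = F i"
        using PiE_arb[OF F, of i] by (cases "i \<in> {0..<S}") simp_all
    qed
  qed
  show "(\<lambda>R. \<lambda>i\<in>{0..<S}. {t. (i, t) \<in> R}) ` Pow (cards S c) \<subseteq> PiE {0..<S} (\<lambda>i. Pow {..<c i})"
    by (auto simp: cards_def)
  show "(\<lambda>F. SIGMA i:{0..<S}. F i) ` PiE {0..<S} (\<lambda>i. Pow {..<c i}) \<subseteq> Pow (cards S c)"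
    by (auto simp: cards_def dest: PiE_mem)
qed

lemma count_subsets:
  assumes n: "n \<in> dominated S c"
  shows "card {R \<in> Pow (cards S c). row_counts S R = n} = (\<Prod>i<S. c i choose n i)"
proof -
  let ?rows = "\<lambda>R. \<lambda>i\<in>{0..<S}. {t. (i, t) \<in> R}"
  let ?Q = "\<lambda>F. (\<lambda>i\<in>{0..<S}. card (F i)) = n"
  have "row_counts S R = (\<lambda>i\<in>{0..<S}. card (?rows R i))" for R
    by (auto simp: row_counts_def card_row)
  then have "card {R \<in> Pow (cards S c). row_counts S R = n} = card {R \<in> Pow (cards S c). ?Q (?rows R)}"
    by simp
  also have "\<dots> = card {F \<in> PiE {0..<S} (\<lambda>i. Pow {..<c i}). ?Q F}"
    by (rule card_filter_bij[OF bij_betw_rows])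
  also have "{F \<in> PiE {0..<S} (\<lambda>i. Pow {..<c i}). ?Q F} = PiE {0..<S} (\<lambda>i. {U. U \<subseteq> {..<c i} \<and> card U = n i})"
    using n by (auto simp: dominated_iff fun_eq_iff PiE_iff extensional_def)
  also have "card \<dots> = (\<Prod>i<S. c i choose n i)"
    by (simp add: card_PiE n_subsets atLeast0LessThan)
  finally show ?thesis .
qed

lemma E_cong:
  assumes "\<And>i. i < S \<Longrightarrow> n i = n' i"
  shows "E S n = E S n'"
proof -
  have cards: "cards S n = cards S n'"
    using assms by (rule cards_cong)
  have counts: "(\<forall>i<S. card {x\<in>X. f x = i} = n i) \<longleftrightarrow> (\<forall>i<S. card {x\<in>X. f x = i} = n' i)" for f X
    using assms by auto
  show ?thesis
    unfolding E_def cards counts ..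
qed

lemma row_counts_dominated:
  assumes "R \<subseteq> cards S c"
  shows "row_counts S R \<in> dominated S c"
proof -
  have "row_count R i \<le> c i" if "i < S" for i
  proof -
    have "row_count R i \<le> row_count (cards S c) i"
      unfolding row_count_def using assms finite_cards by (intro card_mono) auto
    then show ?thesis
      using row_count_cards[OF that] by simp
  qed
  then show ?thesis
    by (simp add: dominated_iff row_counts_def)
qed

lemma num_deals_formula: "num_deals S c = (\<Sum>n\<in>dominated S c. (\<Prod>i<S. c i choose n i) * E S n)"
proof -
  let ?X = "cards S c"
  have "num_deals S c = (\<Sum>R\<in>Pow ?X. E S (row_counts S R))"
  proof -
    have "card (derangements S R) = E S (row_counts S R)" if "R \<subseteq> ?X" for R
    proof -
      have "finite R"
        using finite_subset[OF that finite_cards] .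
      moreover have "\<forall>x\<in>R. fst x < S"
        using that by (auto simp: cards_def)
      ultimately have "card (derangements S R) = E S (row_count R)"
        by (rule card_derangements)
      also have "\<dots> = E S (row_counts S R)"
        by (rule E_cong) (simp add: row_counts_def)
      finally show ?thesis .
    qed
    then show ?thesis
      by (simp add: num_deals_split)
  qed
  also have "\<dots> = (\<Sum>n\<in>dominated S c. \<Sum>R\<in>{R\<in>Pow ?X. row_counts S R = n}. E S (row_counts S R))"
    using row_counts_dominated
    by (intro sum.group[symmetric]) (auto simp: finite_cards finite_dominated)
  also have "\<dots> = (\<Sum>n\<in>dominated S c. card {R\<in>Pow ?X. row_counts S R = n} * E S n)"
    by simp
  also have "\<dots> = (\<Sum>n\<in>dominated S c. (\<Prod>i<S. c i choose n i) * E S n)"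
    using count_subsets by (intro sum.cong) (simp_all only:)
  finally show ?thesis .
qed

definition cum_deals :: "nat \<Rightarrow> (nat \<Rightarrow> nat) \<Rightarrow> nat" where
  "cum_deals S c = (\<Sum>b\<in>dominated S c. num_deals S b)"

lemma cum_deals_cong:
  assumes "\<And>i. i < S \<Longrightarrow> c i = c' i"
  shows "cum_deals S c = cum_deals S c'"
proof -
  have "dominated S c = dominated S c'"
    unfolding dominated_def by (rule PiE_cong) (simp add: assms)
  then show ?thesis
    by (simp add: cum_deals_def)
qed

lemma cum_deals_slice:
  assumes i: "i < S"
  shows "(\<Sum>b\<in>dominated S c. if 1 \<le> b i then num_deals S (b(i := b i - 1)) else 0)
       = (if 1 \<le> c i then cum_deals S (c(i := c i - 1)) else 0)"
proof -
  have "(\<Sum>b\<in>dominated S c. if 1 \<le> b i then num_deals S (b(i := b i - 1)) else 0)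
      = (\<Sum>b\<in>{b \<in> dominated S c. 1 \<le> b i}. num_deals S (b(i := b i - 1)))"
    by (rule sum.inter_filter[OF finite_dominated, symmetric])
  also have "\<dots> = (if 1 \<le> c i then cum_deals S (c(i := c i - 1)) else 0)"
  proof (cases "1 \<le> c i")
    case False
    then have "{b \<in> dominated S c. 1 \<le> b i} = {}"
      using i by (auto simp: dominated_iff)
    then show ?thesis
      by (simp only: sum.empty if_not_P[OF False])
  next
    case True
    have "(\<Sum>b\<in>{b \<in> dominated S c. 1 \<le> b i}. num_deals S (b(i := b i - 1)))
        = (\<Sum>b\<in>dominated S (c(i := c i - 1)). num_deals S b)"
    proof (rule sum.reindex_bij_witness[where i = "\<lambda>b. b(i := b i + 1)" and j = "\<lambda>b. b(i := b i - 1)"])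
      fix b assume b: "b \<in> {b \<in> dominated S c. 1 \<le> b i}"
      show "(b(i := b i - 1))(i := (b(i := b i - 1)) i + 1) = b"
        using b by auto
      show "b(i := b i - 1) \<in> dominated S (c(i := c i - 1))"
        using b i by (auto simp: dominated_iff)
    next
      fix b assume b: "b \<in> dominated S (c(i := c i - 1))"
      show "(b(i := b i + 1))(i := (b(i := b i + 1)) i - 1) = b"
        by auto
      have "b i \<le> c i - 1"
        using b i by (auto simp: dominated_iff)
      then show "b(i := b i + 1) \<in> {b \<in> dominated S c. 1 \<le> b i}"
        using b i True by (auto simp: dominated_iff)
    qed simp
    then show ?thesis
      using True by (simp add: cum_deals_def)
  qed
  finally show ?thesis .
qed

lemma cum_deals_rec:
  "cum_deals S c = 1 + (\<Sum>i<S. if 1 \<le> c i then cum_deals S (c(i := c i - 1)) else 0)"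
proof -
  define zero where "zero = (\<lambda>i\<in>{0..<S}. 0::nat)"
  have zero_dom: "zero \<in> dominated S c"
    by (simp add: dominated_iff zero_def)
  have deal_step: "num_deals S b = (if b = zero then 1 else 0)
      + (\<Sum>i<S. if 1 \<le> b i then num_deals S (b(i := b i - 1)) else 0)"
    if b: "b \<in> dominated S c" for b
  proof (cases "b = zero")
    case True
    then show ?thesis
      by (simp add: num_deals_zero zero_def)
  next
    case False
    have "\<exists>i<S. 1 \<le> b i"
    proof (rule ccontr)
      assume "\<not> (\<exists>i<S. 1 \<le> b i)"
      then have "b = zero"
        using b by (auto simp: fun_eq_iff zero_def dominated_iff)
      with False show False ..
    qed
    then show ?thesis
      using num_deals_rec False by simp
  qed
  have "cum_deals S c = (\<Sum>b\<in>dominated S c. (if b = zero then 1 else 0))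
      + (\<Sum>b\<in>dominated S c. \<Sum>i<S. if 1 \<le> b i then num_deals S (b(i := b i - 1)) else 0)"
    unfolding cum_deals_def sum.distrib[symmetric] using deal_step by (rule sum.cong[OF refl])
  also have "(\<Sum>b\<in>dominated S c. (if b = zero then 1 else 0)) = (1::nat)"
    using zero_dom finite_dominated by (simp add: sum.delta)
  also have "(\<Sum>b\<in>dominated S c. \<Sum>i<S. if 1 \<le> b i then num_deals S (b(i := b i - 1)) else 0)
      = (\<Sum>i<S. if 1 \<le> c i then cum_deals S (c(i := c i - 1)) else 0)"
    by (subst sum.swap) (rule sum.cong[OF refl], rule cum_deals_slice, simp)
  finally show ?thesis .
qed

(* Hockey-stick identity, coordinatewise. *)
lemma sum_dominated_choose:
  "(\<Sum>b\<in>dominated S c. \<Prod>i<S. b i choose n i) = (\<Prod>i<S. Suc (c i) choose Suc (n i))"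
proof -
  have "(\<Sum>b\<in>dominated S c. \<Prod>i<S. b i choose n i) = (\<Prod>i\<in>{0..<S}. \<Sum>y\<in>{0..c i}. y choose n i)"
    unfolding dominated_def atLeast0LessThan[symmetric] by (rule prod_sum_PiE[symmetric]) simp_all
  also have "\<dots> = (\<Prod>i<S. Suc (c i) choose Suc (n i))"
    by (simp add: atLeast0LessThan atLeast0AtMost sum_choose_upper)
  finally show ?thesis .
qed

lemma sum_dominated_extend:
  assumes "b \<in> dominated S c"
  shows "(\<Sum>n\<in>dominated S b. (\<Prod>i<S. b i choose n i) * E S n)
       = (\<Sum>n\<in>dominated S c. (\<Prod>i<S. b i choose n i) * E S n)"
proof (rule sum.mono_neutral_left[OF finite_dominated])
  show "dominated S b \<subseteq> dominated S c"
  proof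
    fix n assume "n \<in> dominated S b"
    then show "n \<in> dominated S c"
      using assms unfolding dominated_iff by (meson le_trans)
  qed
  show "\<forall>n\<in>dominated S c - dominated S b. (\<Prod>i<S. b i choose n i) * E S n = 0"
  proof
    fix n assume "n \<in> dominated S c - dominated S b"
    then obtain i where "i < S" "b i < n i"
      by (auto simp: dominated_iff not_le)
    then have "(\<Prod>i<S. b i choose n i) = 0"
      by (intro prod_zero) auto
    then show "(\<Prod>i<S. b i choose n i) * E S n = 0"
      by simp
  qed
qed

lemma cum_deals_formula:
  "cum_deals S c = (\<Sum>n\<in>dominated S c. (\<Prod>i<S. Suc (c i) choose Suc (n i)) * E S n)"
proof -
  have "cum_deals S c = (\<Sum>b\<in>dominated S c. \<Sum>n\<in>dominated S c. (\<Prod>i<S. b i choose n i) * E S n)"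
    unfolding cum_deals_def num_deals_formula using sum_dominated_extend by (rule sum.cong[OF refl])
  also have "\<dots> = (\<Sum>n\<in>dominated S c. (\<Sum>b\<in>dominated S c. \<Prod>i<S. b i choose n i) * E S n)"
    by (subst sum.swap) (simp add: sum_distrib_right)
  also have "\<dots> = (\<Sum>n\<in>dominated S c. (\<Prod>i<S. Suc (c i) choose Suc (n i)) * E S n)"
    by (simp only: sum_dominated_choose)
  finally show ?thesis .
qed

lemma B_dominated_sum:
  assumes m: "\<And>i. i < S \<Longrightarrow> m i = Suc (c i)"
  shows "B S m = (\<Sum>n\<in>dominated S c. (\<Prod>i<S. Suc (c i) choose Suc (n i)) * E S n)"
  unfolding B_def
proof (rule sum.reindex_bij_witness[where i = "\<lambda>n. \<lambda>i\<in>{0..<S}. n i + 1" and j = "\<lambda>k. \<lambda>i\<in>{0..<S}. k i - 1"])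
  fix k assume k: "k \<in> PiE {0..<S} (\<lambda>i. {1..m i})"
  show "(\<lambda>i\<in>{0..<S}. (\<lambda>i\<in>{0..<S}. k i - 1) i + 1) = k"
  proof
    fix i show "(\<lambda>i\<in>{0..<S}. (\<lambda>i\<in>{0..<S}. k i - 1) i + 1) i = k i"
      using PiE_mem[OF k, of i] PiE_arb[OF k, of i] by (cases "i \<in> {0..<S}") auto
  qed
  have "k i - 1 \<le> c i" if "i < S" for i
    using PiE_mem[OF k, of i] m[OF that] that by auto
  then show "(\<lambda>i\<in>{0..<S}. k i - 1) \<in> dominated S c"
    by (simp add: dominated_iff)
  have "E S (\<lambda>i. k i - 1) = E S (\<lambda>i\<in>{0..<S}. k i - 1)"
    by (rule E_cong) simp
  moreover have "(\<Prod>i<S. m i choose k i) = (\<Prod>i<S. Suc (c i) choose Suc ((\<lambda>i\<in>{0..<S}. k i - 1) i))"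
  proof (rule prod.cong)
    fix i assume "i \<in> {..<S}"
    then have "Suc (k i - 1) = k i" "m i = Suc (c i)"
      using PiE_mem[OF k, of i] m by auto
    then show "m i choose k i = Suc (c i) choose Suc ((\<lambda>i\<in>{0..<S}. k i - 1) i)"
      using \<open>i \<in> {..<S}\<close> by (simp del: binomial_Suc_Suc)
  qed simp
  ultimately show "(\<Prod>i<S. Suc (c i) choose Suc ((\<lambda>i\<in>{0..<S}. k i - 1) i)) * E S (\<lambda>i\<in>{0..<S}. k i - 1)
      = (\<Prod>i<S. m i choose k i) * E S (\<lambda>i. k i - 1)"
    by simp
next
  fix n assume n: "n \<in> dominated S c"
  then have bound: "\<forall>j<S. n j \<le> c j" and ext: "\<forall>j. \<not> j < S \<longrightarrow> n j = undefined"
    by (simp_all add: dominated_iff)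
  show "(\<lambda>i\<in>{0..<S}. (\<lambda>i\<in>{0..<S}. n i + 1) i - 1) = n"
    using ext by (auto simp: fun_eq_iff)
  show "(\<lambda>i\<in>{0..<S}. n i + 1) \<in> PiE {0..<S} (\<lambda>i. {1..m i})"
    using bound m by auto
qed

lemma cum_deals_B:
  assumes "\<forall>i<S. 0 < m i"
  shows "cum_deals S (\<lambda>i. m i - 1) = B S m"
  using assms by (simp add: cum_deals_formula B_dominated_sum[where c = "\<lambda>i. m i - 1"])

theorem mainTheorem11:
  fixes S :: nat and m :: "nat \<Rightarrow> nat"
  assumes "\<forall>i<S. 0 < m i"
  shows "(\<exists>P. is_expansion_FB S P) \<and>
         (\<forall>P. is_expansion_FB S P \<longrightarrow>
              P (\<lambda>i. if i < S then m i else 0) = real (B S m))"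
proof -
  define K where "K c = real (cum_deals S c)" for c
  have rec: "K c = 1 + (\<Sum>i<S. if 1 \<le> c i then K (c(i := c i - 1)) else 0)" for c
    unfolding K_def by (subst cum_deals_rec) (simp add: of_nat_sum if_distrib cong: if_cong)
  define \<alpha> where "\<alpha> = (\<lambda>i. if i < S then m i else 0)"
  have \<alpha>: "\<alpha> \<in> expvecs S" "\<forall>i<S. 1 \<le> \<alpha> i"
    using assms by (auto simp: \<alpha>_def expvecs_def)
  have "shifted_series S K \<alpha> = real (cum_deals S (\<lambda>i. \<alpha> i - 1))"
    using \<alpha> by (simp add: shifted_series_def K_def)
  also have "\<dots> = real (B S m)"
    using cum_deals_B[OF assms] cum_deals_cong[of S "\<lambda>i. \<alpha> i - 1" "\<lambda>i. m i - 1"]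
    by (simp add: \<alpha>_def)
  finally have coeff: "shifted_series S K \<alpha> = real (B S m)" .
  have expansion: "is_expansion_FB S (shifted_series S K)"
    by (rule shifted_series_is_expansion[OF rec])
  have "P \<alpha> = real (B S m)" if "is_expansion_FB S P" for P
    using expansion_FB_unique[OF that expansion \<alpha>(1)] coeff by simp
  then show ?thesis
    using expansion by (auto simp: \<alpha>_def)
qed

end
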